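(* Let $n\geq 3$ and let $M$ be an indecomposable regular $\mathcal{K}_n$-module of quasi-length $r+1\geq 2$ with quasi-top $X$, i.e. $M=[r+1]X$. Then: (1) $\underline{\dim}\,M=(m,m)$ for some $m$ if and only if $\underline{\dim}\,X=b\,(B_{2r-1},B_{2r+1})$ for some positive integer $b$; in this case $m=bA_{r+1}$. (2) $\underline{\dim}\,M=((n-1)m,m)$ for some $m$ if and only if $\underline{\dim}\,X=b\,(B_{2r-3},B_{2r-1})$ when $r\geq 2$, respectively $\underline{\dim}\,X=(b,b)$ when $r=1$, for some positive integer $b$; in this case $m=bA_{r+1}$.
   Context: $\mathcal{K}_n$ is the quiver with vertices $1,2$ and $n$ arrows $2\to1$; modules are finite-dimensional representations over an algebraically closed field, dimension vectors are $(\dim M_2,\dim M_1)$, and $\underline{\dim}\,\tau M=(\underline{\dim}\,M)\Phi$ with $\Phi=\begin{pmatrix} n^2-1 & n\\ -n & -1\end{pmatrix}$ ($\tau$ the Auslander–Reiten translation). Each indecomposable regular module $M$ admits a unique chain of irreducible epimorphisms $M=[r]X\to[r-1]X\to\cdots\to[1]X=X$ with $X$ quasi-simple; $X$ is the quasi-top and $r$ the quasi-length of $M$, and $\underline{\dim}\,[r]X=\sum_{i=0}^{r-1}\underline{\dim}\,\tau^iX$. The integers $A_i$ are defined by $A_0=0$, $A_1=1$, $A_{i+2}=nA_{i+1}-A_i$, and $B_j$ by $B_{2i}=A_i$ and $B_{2i+1}=A_{i+1}-A_i$ for $i\geq 0$ (so $B_0=0,B_1=1,B_2=1,B_3=n-1,B_4=n,\dots$).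 *)

theory Defs
  imports Main
begin

text \<open>Dimension vectors of K_n-modules are pairs (dim M_2, dim M_1) of integers.
  The Coxeter transformation acts on row vectors: dim (tau M) = (dim M) Phi with
  Phi = [[n^2-1, n], [-n, -1]], and its inverse Phi^-1 = [[-1, -n], [n, n^2-1]].\<close>

definition Phi :: "nat \<Rightarrow> int \<times> int \<Rightarrow> int \<times> int" where
  "Phi n v = (fst v * (int n ^ 2 - 1) - int n * snd v, int n * fst v - snd v)"

definition Phi_inv :: "nat \<Rightarrow> int \<times> int \<Rightarrow> int \<times> int" where
  "Phi_inv n v = (- fst v + int n * snd v, - int n * fst v + (int n ^ 2 - 1) * snd v)"

definition dim_tau :: "nat \<Rightarrow> nat \<Rightarrow> int \<times> int \<Rightarrow> int \<times> int" where
  "dim_tau n i x = (Phi n ^^ i) x"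

definition dim_tau_inv :: "nat \<Rightarrow> nat \<Rightarrow> int \<times> int \<Rightarrow> int \<times> int" where
  "dim_tau_inv n i x = (Phi_inv n ^^ i) x"

text \<open>dim [r]X = sum_{i=0}^{r-1} dim tau^i X.\<close>
definition dim_ql :: "nat \<Rightarrow> nat \<Rightarrow> int \<times> int \<Rightarrow> int \<times> int" where
  "dim_ql n r x = (\<Sum>i<r. fst (dim_tau n i x), \<Sum>i<r. snd (dim_tau n i x))"

definition nonneg_vec :: "int \<times> int \<Rightarrow> bool" where
  "nonneg_vec v \<longleftrightarrow> fst v \<ge> 0 \<and> snd v \<ge> 0"

text \<open>Necessary conditions satisfied by the dimension vector x of a quasi-simple
  regular K_n-module X: x is nonzero and every dim tau^i X (i in Z) is a
  dimension vector, i.e. nonnegative (regular modules are never annihilated by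
  powers of tau or tau^-1).\<close>
definition regular_dim :: "nat \<Rightarrow> int \<times> int \<Rightarrow> bool" where
  "regular_dim n x \<longleftrightarrow> x \<noteq> (0, 0) \<and>
     (\<forall>i. nonneg_vec (dim_tau n i x)) \<and> (\<forall>i. nonneg_vec (dim_tau_inv n i x))"

fun A :: "nat \<Rightarrow> nat \<Rightarrow> int" where
  "A n 0 = 0"
| "A n (Suc 0) = 1"
| "A n (Suc (Suc i)) = int n * A n (Suc i) - A n i"

definition B :: "nat \<Rightarrow> nat \<Rightarrow> int" where
  "B n j = (if even j then A n (j div 2) else A n (j div 2 + 1) - A n (j div 2))"

end

theory Submission
  imports Defs
begin

text \<open>Let U = rec_seq n p q be the solution of the recurrence U (k+2) = n U (k+1) - U k
  of A with (U 1, U 0) = (p, q) = dim X. Then dim tau^i X = (U (2i+1), U (2i)), and the addition formula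
  U (m+k+1) = U (m+1) A (k+1) - U m A k makes the sum telescope to
  dim [r+1]X = A (r+1) (U (r+1), U r). So dim [r+1]X is a multiple of (c, 1) iff
  U (r+1) = c U r, and then m = A (r+1) U r. By Cassini's identity the linear map
  dim X \<mapsto> (U (r+1), U r) is unimodular, so this condition says exactly that
  dim X = b (A r - c A (r-1), A (r+1) - c A r) with b = U r. For c = 1 and c = n - 1 these
  are the stated multiples of B-values, and b > 0 because dim X is nonnegative and nonzero.\<close>

fun rec_seq :: "nat \<Rightarrow> int \<Rightarrow> int \<Rightarrow> nat \<Rightarrow> int" where
  "rec_seq n p q 0 = q"
| "rec_seq n p q (Suc 0) = p"
| "rec_seq n p q (Suc (Suc k)) = int n * rec_seq n p q (Suc k) - rec_seq n p q k"

lemma Phi_pow_eq_rec_seq: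
  "(Phi n ^^ i) (p, q) = (rec_seq n p q (2 * i + 1), rec_seq n p q (2 * i))"
proof (induction i)
  case (Suc i)
  have "rec_seq n p q (2 * Suc i) = int n * rec_seq n p q (2 * i + 1) - rec_seq n p q (2 * i)"
    and "rec_seq n p q (2 * Suc i + 1) = int n * rec_seq n p q (2 * Suc i) - rec_seq n p q (2 * i + 1)"
    by (simp_all add: numeral_2_eq_2)
  with Suc show ?case
    by (simp add: Phi_def power2_eq_square algebra_simps)
qed simp

lemma rec_seq_add:
  "rec_seq n p q (m + Suc k) = rec_seq n p q (Suc m) * A n (Suc k) - rec_seq n p q m * A n k"
proof (induction k rule: induct_nat_012)
  case (ge2 k)
  let ?U = "rec_seq n p q"
  have "?U (m + Suc (Suc (Suc k))) = int n * ?U (m + Suc (Suc k)) - ?U (m + Suc k)"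
    by simp
  also have "\<dots> = int n * (?U (Suc m) * A n (Suc (Suc k)) - ?U m * A n (Suc k))
      - (?U (Suc m) * A n (Suc k) - ?U m * A n k)"
    using ge2 by simp
  also have "\<dots> = ?U (Suc m) * A n (Suc (Suc (Suc k))) - ?U m * A n (Suc (Suc k))"
    by (simp add: algebra_simps)
  finally show ?case .
qed simp_all

lemma rec_seq_Suc: "rec_seq n p q (Suc k) = p * A n (Suc k) - q * A n k"
  using rec_seq_add[of n p q 0 k] by (simp add: mult.commute)

lemma A_cassini: "A n (Suc k) ^ 2 - A n (Suc (Suc k)) * A n k = 1"
  by (induction k) (simp_all add: power2_eq_square algebra_simps)

lemma A_nonneg_less_Suc:
  assumes "n \<ge> 2"
  shows "0 \<le> A n k \<and> A n k < A n (Suc k)"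
proof (induction k)
  case (Suc k)
  have "int n * A n (Suc k) \<ge> 2 * A n (Suc k)"
    using Suc assms by (intro mult_right_mono) auto
  moreover have "A n (Suc (Suc k)) = int n * A n (Suc k) - A n k" by simp
  ultimately show ?case using Suc by linarith
qed simp

lemma dim_ql_eq_rec_seq:
  "dim_ql n (Suc r) (p, q) = (A n (Suc r) * rec_seq n p q (Suc r), A n (Suc r) * rec_seq n p q r)"
proof (induction r)
  case (Suc r)
  let ?U = "rec_seq n p q"
  have "dim_ql n (Suc (Suc r)) (p, q) =
      (fst (dim_ql n (Suc r) (p, q)) + ?U (Suc r + Suc (Suc r)),
       snd (dim_ql n (Suc r) (p, q)) + ?U (r + Suc (Suc r)))"
  proof -
    have "2 * Suc r + 1 = Suc r + Suc (Suc r)" "2 * Suc r = r + Suc (Suc r)" by simp_all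
    then show ?thesis
      unfolding dim_ql_def dim_tau_def Phi_pow_eq_rec_seq by (simp only: sum.lessThan_Suc fst_conv snd_conv)
  qed
  also have "\<dots> = (A n (Suc (Suc r)) * ?U (Suc (Suc r)), A n (Suc (Suc r)) * ?U (Suc r))"
    unfolding Suc rec_seq_add by (simp del: rec_seq.simps A.simps add: algebra_simps)
  finally show ?case .
qed (simp add: dim_ql_def dim_tau_def)

lemma rec_seq_consecutive_iff:
  "rec_seq n p q (Suc (Suc k)) = u \<and> rec_seq n p q (Suc k) = w \<longleftrightarrow>
   (p, q) = (A n (Suc k) * w - A n k * u, A n (Suc (Suc k)) * w - A n (Suc k) * u)"
  using A_cassini[of n k] unfolding rec_seq_Suc by auto algebra+

lemma rec_seq_proportional_iff:
  "rec_seq n p q (Suc (Suc k)) = c * b \<and> rec_seq n p q (Suc k) = b \<longleftrightarrow>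
   (p, q) = (b * (A n (Suc k) - c * A n k), b * (A n (Suc (Suc k)) - c * A n (Suc k)))"
  unfolding rec_seq_consecutive_iff by (simp add: algebra_simps)

lemma dim_ql_proportional_iff:
  assumes "n \<ge> 2"
  shows "dim_ql n (Suc r) (p, q) = (c * m, m) \<longleftrightarrow>
    rec_seq n p q (Suc r) = c * rec_seq n p q r \<and> m = A n (Suc r) * rec_seq n p q r"
proof -
  have "A n (Suc r) > 0"
    using A_nonneg_less_Suc[OF assms, of r] by simp
  then show ?thesis
    unfolding dim_ql_eq_rec_seq by (auto simp: mult.left_commute[of c])
qed

lemma pos_scalar_if_nonneg_nonzero:
  fixes b v1 v2 :: int
  assumes "(p, q) = (b * v1, b * v2)" "v1 > 0" "v2 > 0" "nonneg_vec (p, q)" "(p, q) \<noteq> (0, 0)"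
  shows "b > 0"
proof (rule ccontr)
  assume "\<not> b > 0"
  then have "b * v1 \<le> 0" "b * v2 \<le> 0"
    using assms(2,3) by (simp_all add: mult_nonpos_nonneg)
  with assms(1,4,5) show False
    unfolding nonneg_vec_def by auto
qed

lemma dim_ql_proportional:
  fixes c v1 v2 :: int
  assumes "n \<ge> 2"
    and v1: "v1 = A n (Suc k) - c * A n k" and v2: "v2 = A n (Suc (Suc k)) - c * A n (Suc k)"
    and "v1 > 0" "v2 > 0" "nonneg_vec (p, q)" "(p, q) \<noteq> (0, 0)"
  shows "(\<exists>m. dim_ql n (Suc (Suc k)) (p, q) = (c * m, m)) \<longleftrightarrow> (\<exists>b > 0. (p, q) = (b * v1, b * v2))"
    and "dim_ql n (Suc (Suc k)) (p, q) = (c * m, m) \<Longrightarrow> (p, q) = (b * v1, b * v2) \<Longrightarrow>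
      m = b * A n (Suc (Suc k))"
proof -
  note seq_iff = rec_seq_proportional_iff[of n p q k c, folded v1 v2]
  note dim_iff = dim_ql_proportional_iff[OF assms(1), of "Suc k" p q c]
  have "(\<exists>b. (p, q) = (b * v1, b * v2)) \<longleftrightarrow> (\<exists>b > 0. (p, q) = (b * v1, b * v2))"
    using pos_scalar_if_nonneg_nonzero assms(4-7) by blast
  then show "(\<exists>m. dim_ql n (Suc (Suc k)) (p, q) = (c * m, m)) \<longleftrightarrow> (\<exists>b > 0. (p, q) = (b * v1, b * v2))"
    unfolding dim_iff seq_iff[symmetric] by auto
  show "m = b * A n (Suc (Suc k))"
    if "dim_ql n (Suc (Suc k)) (p, q) = (c * m, m)" "(p, q) = (b * v1, b * v2)"
    using that unfolding dim_iff seq_iff[symmetric] by (simp add: mult.commute)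
qed

lemma B_odd: "B n (2 * k + 1) = A n (Suc k) - A n k"
  by (simp add: B_def)

lemma A_recurrence_shifted: "A n (Suc (Suc k)) - (int n - 1) * A n (Suc k) = A n (Suc k) - A n k"
  by (simp add: algebra_simps)

lemma regular_dim_nonneg_nonzero: "regular_dim n x \<Longrightarrow> nonneg_vec x \<and> x \<noteq> (0, 0)"
  unfolding regular_dim_def by (metis dim_tau_def funpow_0)

theorem proposition4p1:
  fixes n r :: nat and x :: "int \<times> int"
  assumes "n \<ge> 3" and "r \<ge> 1" and "regular_dim n x"
  shows "((\<exists>m. dim_ql n (r + 1) x = (m, m)) \<longleftrightarrow>
           (\<exists>b > 0. x = (b * B n (2 * r - 1), b * B n (2 * r + 1))))
       \<and> (\<forall>m b. dim_ql n (r + 1) x = (m, m) \<and> b > 0 \<and>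
           x = (b * B n (2 * r - 1), b * B n (2 * r + 1)) \<longrightarrow> m = b * A n (r + 1))
       \<and> ((\<exists>m. dim_ql n (r + 1) x = ((int n - 1) * m, m)) \<longleftrightarrow>
           (\<exists>b > 0. x = (if r = 1 then (b, b) else (b * B n (2 * r - 3), b * B n (2 * r - 1)))))
       \<and> (\<forall>m b. dim_ql n (r + 1) x = ((int n - 1) * m, m) \<and> b > 0 \<and>
           x = (if r = 1 then (b, b) else (b * B n (2 * r - 3), b * B n (2 * r - 1)))
           \<longrightarrow> m = b * A n (r + 1))"
proof -
  obtain k where r: "r = Suc k" using assms(2) by (cases r) auto
  obtain p q where x: "x = (p, q)" by fastforce
  have n2: "n \<ge> 2" using assms(1) by simp
  have x_ok: "nonneg_vec (p, q)" "(p, q) \<noteq> (0, 0)"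
    using regular_dim_nonneg_nonzero[OF assms(3)] unfolding x by auto
  have mono: "A n j < A n (Suc j)" for j
    using A_nonneg_less_Suc[OF n2] by blast
  define d where "d = (if r = 1 then 1 else B n (2 * r - 3))"
  have B1: "B n (2 * r - 1) = A n (Suc k) - 1 * A n k"
    and B2: "B n (2 * r + 1) = A n (Suc (Suc k)) - 1 * A n (Suc k)"
    using B_odd[of n k] B_odd[of n "Suc k"] unfolding r by simp_all
  have d: "d = A n (Suc k) - (int n - 1) * A n k"
    using B_odd A_recurrence_shifted unfolding d_def r by (cases k) simp_all
  have d_pos: "d > 0"
    using mono B_odd unfolding d_def r by (cases k) simp_all
  have B3: "B n (2 * r - 1) = A n (Suc (Suc k)) - (int n - 1) * A n (Suc k)"
    using B1 A_recurrence_shifted by simp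
  have if_eq: "(if r = 1 then (b, b) else (b * B n (2 * r - 3), b * B n (2 * r - 1))) =
      (b * d, b * B n (2 * r - 1))" for b :: int
    unfolding d_def r by (simp add: B_def)
  have B_pos: "B n (2 * r - 1) > 0" "B n (2 * r + 1) > 0"
    unfolding B1 B2 using mono[of k] mono[of "Suc k"] by simp_all
  note diag = dim_ql_proportional[OF n2 B1 B2 B_pos x_ok]
  note slope = dim_ql_proportional[OF n2 d B3 d_pos B_pos(1) x_ok]
  have "dim_ql n (r + 1) x = dim_ql n (Suc (Suc k)) (p, q)" "A n (r + 1) = A n (Suc (Suc k))"
    unfolding r x by simp_all
  then show ?thesis
    unfolding if_eq using diag(1) slope(1) diag(2) slope(2) x by simp metis
qed

end
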